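(* Let $X=\frac12\mathbb{D}=\{z\in\mathbb{C}:|z|<1/2\}$ and let $s(z,w)=\frac{1}{1-z\bar w}$ on $X$. For every $n\ge2$ there exists a kernel $\ell$ on $X$ with $\ell/s$ positive semi-definite such that: (1) a sequence in $X$ is interpolating for $\mathrm{Mult}(\mathcal{H}_s,\mathcal{H}_\ell)$ if and only if it satisfies the Carleson measure condition for $\mathcal{H}_s$ and is weakly separated by $\ell$; but (2) $\ell$ does not have the automatic separation property; specifically there is a sequence in $X$ that is $n$-weakly separated by $\ell$ but not $(n+1)$-weakly separated by $\ell$.
   Context: A kernel on $X$ is a positive semi-definite function $k:X\times X\to\mathbb{C}$; $\mathcal{H}_k$ its reproducing kernel Hilbert space, $k_w=k(\cdot,w)$, $\hat k_w=k_w/\|k_w\|$. "$\ell/s$ positive semi-definite" means $\ell=sg$ with $g$ a positive semi-definite kernel. $d_k(z,w)=\sqrt{1-|\langle\hat k_z,\hat k_w\rangle|^2}$; $\{\lambda_i\}$ is weakly separated by $k$ if $d_k(\lambda_i,\lambda_j)\ge\epsilon>0$ for $i\ne j$. For $n\ge2$, $\{\lambda_i\}$ is $n$-weakly separated by $k$ if there is $\epsilon>0$ such that for every $n$-point subset $\{\mu_1,\dots,\mu_n\}$ of $\{\lambda_i\}$, $\mathrm{dist}(\hat k_{\mu_1},\mathrm{span}\{\hat k_{\mu_2},\dots,\hat k_{\mu_n}\})\ge\epsilon$. $k$ has the automatic separation property if every sequence weakly separated by $k$ is $n$-weakly separated by $k$ for all $n\ge3$. Interpolating for $\mathrm{Mult}(\mathcal{H}_s,\mathcal{H}_\ell)$: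 for every bounded $\{w_i\}$ there is $\phi$ with $f\mapsto\phi f$ bounded $\mathcal{H}_s\to\mathcal{H}_\ell$ and $\phi(\lambda_i)=w_i\|\ell_{\lambda_i}\|/\|s_{\lambda_i}\|$. Carleson measure condition for $\mathcal{H}_s$: $\sum_i|f(\lambda_i)|^2/\|s_{\lambda_i}\|^2\le C\|f\|^2$ for all $f\in\mathcal{H}_s$, some $C>0$. *)

theory Defs
  imports "HOL-Analysis.Analysis"
begin

definition psd_on :: "'a set \<Rightarrow> ('a \<Rightarrow> 'a \<Rightarrow> complex) \<Rightarrow> bool" where
  "psd_on X k \<longleftrightarrow> (\<forall>(m::nat) (x::nat \<Rightarrow> 'a) (c::nat \<Rightarrow> complex).
      (\<forall>i<m. x i \<in> X) \<longrightarrow>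
      (let q = (\<Sum>i<m. \<Sum>j<m. cnj (c i) * c j * k (x i) (x j)) in Im q = 0 \<and> 0 \<le> Re q))"

definition quot_psd_on :: "'a set \<Rightarrow> ('a \<Rightarrow> 'a \<Rightarrow> complex) \<Rightarrow> ('a \<Rightarrow> 'a \<Rightarrow> complex) \<Rightarrow> bool" where
  "quot_psd_on X l s \<longleftrightarrow> (\<exists>g. psd_on X g \<and> (\<forall>z\<in>X. \<forall>w\<in>X. l z w = s z w * g z w))"

text \<open>RKHS ball: f belongs to H_k with norm at most C (Aronszajn's characterization:
  C^2 k(z,w) - f(z) conj(f(w)) is psd).\<close>
definition rkhs_ball :: "'a set \<Rightarrow> ('a \<Rightarrow> 'a \<Rightarrow> complex) \<Rightarrow> ('a \<Rightarrow> complex) \<Rightarrow> real \<Rightarrow> bool" where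
  "rkhs_ball X k f C \<longleftrightarrow> psd_on X (\<lambda>z w. complex_of_real (C\<^sup>2) * k z w - f z * cnj (f w))"

definition knorm :: "('a \<Rightarrow> 'a \<Rightarrow> complex) \<Rightarrow> 'a \<Rightarrow> real" where
  "knorm k w = sqrt (Re (k w w))"

text \<open>d_k(z,w) = sqrt(1 - |<hat k_z, hat k_w>|^2), with <k_z,k_w> = k(w,z).\<close>
definition dk :: "('a \<Rightarrow> 'a \<Rightarrow> complex) \<Rightarrow> 'a \<Rightarrow> 'a \<Rightarrow> real" where
  "dk k z w = sqrt (1 - (cmod (k w z / complex_of_real (knorm k z * knorm k w)))\<^sup>2)"

text \<open>Norm of the finite combination sum_{i<m} a_i k_{x_i} in H_k:
  ||sum a_i k_{x_i}||^2 = sum_{i,j} a_i conj(a_j) <k_{x_i},k_{x_j}> = sum a_i conj(a_j) k(x_j,x_i).\<close>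
definition comb_norm :: "('a \<Rightarrow> 'a \<Rightarrow> complex) \<Rightarrow> nat \<Rightarrow> (nat \<Rightarrow> complex) \<Rightarrow> (nat \<Rightarrow> 'a) \<Rightarrow> real" where
  "comb_norm k m a x = sqrt (Re (\<Sum>i<m. \<Sum>j<m. a i * cnj (a j) * k (x j) (x i)))"

text \<open>dist(hat k_{mu_0}, span{hat k_{mu_1},...,hat k_{mu_{n-1}}}) (points mu_0..mu_{n-1}).\<close>
definition span_dist :: "('a \<Rightarrow> 'a \<Rightarrow> complex) \<Rightarrow> nat \<Rightarrow> (nat \<Rightarrow> 'a) \<Rightarrow> real" where
  "span_dist k n \<mu> = (INF c::nat \<Rightarrow> complex.
      comb_norm k n (\<lambda>i. (if i = 0 then 1 else - c i) / complex_of_real (knorm k (\<mu> i))) \<mu>)"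

definition weakly_separated :: "('a \<Rightarrow> 'a \<Rightarrow> complex) \<Rightarrow> (nat \<Rightarrow> 'a) \<Rightarrow> bool" where
  "weakly_separated k lam \<longleftrightarrow> (\<exists>\<epsilon>>0. \<forall>i j. i \<noteq> j \<longrightarrow> dk k (lam i) (lam j) \<ge> \<epsilon>)"

text \<open>n-weakly separated: uniform lower bound over all n-point subsets {mu_0,...,mu_{n-1}}
  of the set {lam_i} (every choice of distinguished point mu_0).\<close>
definition n_weakly_separated :: "nat \<Rightarrow> ('a \<Rightarrow> 'a \<Rightarrow> complex) \<Rightarrow> (nat \<Rightarrow> 'a) \<Rightarrow> bool" where
  "n_weakly_separated n k lam \<longleftrightarrow> (\<exists>\<epsilon>>0. \<forall>\<mu>::nat \<Rightarrow> 'a.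
      inj_on \<mu> {..<n} \<and> \<mu> ` {..<n} \<subseteq> range lam \<longrightarrow> span_dist k n \<mu> \<ge> \<epsilon>)"

definition automatic_separation :: "'a set \<Rightarrow> ('a \<Rightarrow> 'a \<Rightarrow> complex) \<Rightarrow> bool" where
  "automatic_separation X k \<longleftrightarrow> (\<forall>lam::nat \<Rightarrow> 'a. range lam \<subseteq> X \<longrightarrow> weakly_separated k lam \<longrightarrow>
      (\<forall>n\<ge>3. n_weakly_separated n k lam))"

definition is_multiplier :: "'a set \<Rightarrow> ('a \<Rightarrow> 'a \<Rightarrow> complex) \<Rightarrow> ('a \<Rightarrow> 'a \<Rightarrow> complex) \<Rightarrow> ('a \<Rightarrow> complex) \<Rightarrow> bool" where
  "is_multiplier X s l \<phi> \<longleftrightarrow> (\<exists>M\<ge>0. \<forall>f C. C \<ge> 0 \<longrightarrow> rkhs_ball X s f C \<longrightarrow>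
      rkhs_ball X l (\<lambda>z. \<phi> z * f z) (M * C))"

definition interpolating :: "'a set \<Rightarrow> ('a \<Rightarrow> 'a \<Rightarrow> complex) \<Rightarrow> ('a \<Rightarrow> 'a \<Rightarrow> complex) \<Rightarrow> (nat \<Rightarrow> 'a) \<Rightarrow> bool" where
  "interpolating X s l lam \<longleftrightarrow> (\<forall>w::nat \<Rightarrow> complex. (\<exists>B. \<forall>i. cmod (w i) \<le> B) \<longrightarrow>
      (\<exists>\<phi>. is_multiplier X s l \<phi> \<and>
         (\<forall>i. \<phi> (lam i) = w i * complex_of_real (knorm l (lam i) / knorm s (lam i)))))"

definition carleson :: "'a set \<Rightarrow> ('a \<Rightarrow> 'a \<Rightarrow> complex) \<Rightarrow> (nat \<Rightarrow> 'a) \<Rightarrow> bool" where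
  "carleson X s lam \<longleftrightarrow> (\<exists>C>0. \<forall>f D. D \<ge> 0 \<longrightarrow> rkhs_ball X s f D \<longrightarrow>
      (\<forall>N. (\<Sum>i<N. (cmod (f (lam i)))\<^sup>2 / (knorm s (lam i))\<^sup>2) \<le> C * D\<^sup>2))"

definition half_disc :: "complex set" where
  "half_disc = ball 0 (1/2)"

definition szego :: "complex \<Rightarrow> complex \<Rightarrow> complex" where
  "szego z w = 1 / (1 - z * cnj w)"

end

(*
  The kernel is l = s g with g(z, w) = |V(z) \<inter> V(w)| the Gram kernel of indicator vectors of
  finite "feature" sets. Along the sequence 1/(N + 3) the indices are grouped into blocks of n + 1;
  the last point of a block receives the features of the other n points, every other point a
  feature of its own. In H_g distinct blocks are orthogonal, any n of the n + 1 vectors of a block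
  are linearly independent, and the last one is the sum of the others. Since s - 1 is positive
  semi-definite, l dominates g as a quadratic form, so the independence gives a uniform lower
  bound on distances to spans of n - 1 kernel functions (n-weak separation, and weak separation
  as the case of two points). The exact dependence survives in l up to second differences of s
  at points tending to 0, so (n + 1)-weak separation fails.
  Part (1) holds because both sides fail for every sequence in the half disc: the norms of the
  s-kernel functions are bounded there, so the constant 1 violates the Carleson condition, and a
  function interpolating the values 1 would violate Bessel's inequality in H_l on large families
  of points with disjoint feature sets.
*)
theory Submission
  imports Defs "HOL-Library.Complex_Order"
begin

lemma cnj_of_bool [simp]: "cnj (of_bool P) = of_bool P"
  by (cases P) auto

lemma card_inter_eq_sum:
  assumes "finite U" "A \<subseteq> U" "B \<subseteq> U"
  shows "(of_nat (card (A \<inter> B)) :: complex) = (\<Sum>r\<in>U. of_bool (r \<in> A) * of_bool (r \<in> B))"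
proof -
  have "(\<Sum>r\<in>U. of_bool (r \<in> A) * of_bool (r \<in> B)) = (\<Sum>r\<in>U. of_bool (r \<in> A \<inter> B) :: complex)"
    by (intro sum.cong) auto
  also have "\<dots> = of_nat (card (U \<inter> {r. r \<in> A \<inter> B}))"
    using assms(1) by simp
  also have "U \<inter> {r. r \<in> A \<inter> B} = A \<inter> B"
    using assms by auto
  finally show ?thesis ..
qed

lemma ex_not_in_image:
  assumes "finite J" "card J < card A"
  obtains q where "q \<in> A" "q \<notin> f ` J"
proof -
  have "\<not> A \<subseteq> f ` J"
  proof
    assume "A \<subseteq> f ` J"
    then have "card A \<le> card (f ` J)"
      using assms(1) by (intro card_mono) auto
    also have "\<dots> \<le> card J"
      using assms(1) by (rule card_image_le)
    finally show False
      using assms(2) by simp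
  qed
  then show ?thesis
    using that by blast
qed

lemma norm_sq_le_twice_sum_sq:
  fixes u v :: "'a::real_normed_vector"
  shows "(norm u)\<^sup>2 \<le> 2 * ((norm (u + v))\<^sup>2 + (norm v)\<^sup>2)"
proof -
  have "norm u \<le> norm (u + v) + norm v"
    using norm_triangle_ineq4[of "u + v" v] by simp
  then have "(norm u)\<^sup>2 \<le> (norm (u + v) + norm v)\<^sup>2"
    by (simp add: power_mono)
  also have "\<dots> \<le> 2 * ((norm (u + v))\<^sup>2 + (norm v)\<^sup>2)"
    using sum_squares_bound[of "norm (u + v)" "norm v"] by (simp add: power2_eq_square algebra_simps)
  finally show ?thesis .
qed

lemma infinite_obtain_one_sided_subset:
  assumes "infinite S"
  obtains P where "P \<subseteq> S" "finite P" "card P = m"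
    "\<And>z w. z \<in> P \<Longrightarrow> w \<in> P \<Longrightarrow> (z \<in> C \<longleftrightarrow> w \<in> C)"
proof -
  have "infinite (S \<inter> C) \<or> infinite (S - C)"
    using assms by (metis Diff_Compl Diff_Int_distrib infinite_Un Int_Diff_Un)
  then show ?thesis
  proof
    assume "infinite (S \<inter> C)"
    then obtain P where "finite P" "card P = m" "P \<subseteq> S \<inter> C"
      using infinite_arbitrarily_large by blast
    then show ?thesis
      using that by blast
  next
    assume "infinite (S - C)"
    then obtain P where "finite P" "card P = m" "P \<subseteq> S - C"
      using infinite_arbitrarily_large by blast
    then show ?thesis
      using that by blast
  qed
qed

section \<open>Quadratic forms of kernels\<close>

definition kernel_form ::
    "('a \<Rightarrow> 'a \<Rightarrow> complex) \<Rightarrow> nat \<Rightarrow> (nat \<Rightarrow> 'a) \<Rightarrow> (nat \<Rightarrow> complex) \<Rightarrow> complex" where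
  "kernel_form k m x c = (\<Sum>i<m. \<Sum>j<m. cnj (c i) * c j * k (x i) (x j))"

lemma psd_on_iff_kernel_form_nonneg:
  "psd_on X k \<longleftrightarrow> (\<forall>m x c. (\<forall>i<m. x i \<in> X) \<longrightarrow> 0 \<le> kernel_form k m x c)"
  by (auto simp: psd_on_def kernel_form_def less_eq_complex_def Let_def)

lemma psd_onD: "psd_on X k \<Longrightarrow> (\<And>i. i < m \<Longrightarrow> x i \<in> X) \<Longrightarrow> 0 \<le> kernel_form k m x c"
  by (simp add: psd_on_iff_kernel_form_nonneg)

lemma psd_onI: "(\<And>m x c. (\<And>i. i < m \<Longrightarrow> x i \<in> X) \<Longrightarrow> 0 \<le> kernel_form k m x c) \<Longrightarrow> psd_on X k"
  by (simp add: psd_on_iff_kernel_form_nonneg)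

lemma psd_on_subset: "psd_on Y k \<Longrightarrow> X \<subseteq> Y \<Longrightarrow> psd_on X k"
  by (auto simp: psd_on_iff_kernel_form_nonneg)

lemma kernel_form_add:
  "kernel_form (\<lambda>z w. k z w + h z w) m x c = kernel_form k m x c + kernel_form h m x c"
  by (simp add: kernel_form_def distrib_left sum.distrib)

lemma kernel_form_diff:
  "kernel_form (\<lambda>z w. k z w - h z w) m x c = kernel_form k m x c - kernel_form h m x c"
  by (simp add: kernel_form_def right_diff_distrib sum_subtractf)

lemma kernel_form_scale:
  "kernel_form (\<lambda>z w. a * k z w) m x c = a * kernel_form k m x c"
  by (simp add: kernel_form_def sum_distrib_left mult_ac)

lemma kernel_form_points_cong:
  "(\<And>i. i < m \<Longrightarrow> x i = y i) \<Longrightarrow> kernel_form k m x c = kernel_form k m y c"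
  by (simp add: kernel_form_def)

lemma kernel_form_rank_one:
  "kernel_form (\<lambda>z w. f z * cnj (f w)) m x c = of_real ((cmod (\<Sum>i<m. cnj (c i) * f (x i)))\<^sup>2)"
proof -
  have "kernel_form (\<lambda>z w. f z * cnj (f w)) m x c
      = (\<Sum>i<m. cnj (c i) * f (x i)) * cnj (\<Sum>i<m. cnj (c i) * f (x i))"
    by (simp add: kernel_form_def cnj_sum sum_distrib_left sum_distrib_right mult_ac)
  then show ?thesis by (simp only: complex_norm_square)
qed

lemma kernel_form_orthogonal:
  assumes "\<And>i j. i < m \<Longrightarrow> j < m \<Longrightarrow> i \<noteq> j \<Longrightarrow> k (x i) (x j) = 0"
  shows "kernel_form k m x c = (\<Sum>i<m. of_real ((cmod (c i))\<^sup>2) * k (x i) (x i))"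
  unfolding kernel_form_def
proof (rule sum.cong)
  fix i assume "i \<in> {..<m}"
  then have "(\<Sum>j<m. cnj (c i) * c j * k (x i) (x j)) = cnj (c i) * c i * k (x i) (x i)"
    using assms by (subst sum.remove[of _ i]) auto
  then show "(\<Sum>j<m. cnj (c i) * c j * k (x i) (x j)) = of_real ((cmod (c i))\<^sup>2) * k (x i) (x i)"
    by (simp only: complex_norm_square mult.commute[of "cnj (c i)"])
qed simp

lemma kernel_form_support:
  assumes "S \<subseteq> {..<m}" "\<And>i. i < m \<Longrightarrow> i \<notin> S \<Longrightarrow> c i = 0"
  shows "kernel_form k m x c = (\<Sum>i\<in>S. \<Sum>j\<in>S. cnj (c i) * c j * k (x i) (x j))"
proof -
  have "(\<Sum>j<m. cnj (c i) * c j * k (x i) (x j)) = (\<Sum>j\<in>S. cnj (c i) * c j * k (x i) (x j))" for i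
    using assms by (intro sum.mono_neutral_right) auto
  then have "kernel_form k m x c = (\<Sum>i<m. \<Sum>j\<in>S. cnj (c i) * c j * k (x i) (x j))"
    by (simp add: kernel_form_def)
  also have "\<dots> = (\<Sum>i\<in>S. \<Sum>j\<in>S. cnj (c i) * c j * k (x i) (x j))"
    using assms by (intro sum.mono_neutral_right) auto
  finally show ?thesis .
qed

lemma psd_on_add: "psd_on X k \<Longrightarrow> psd_on X h \<Longrightarrow> psd_on X (\<lambda>z w. k z w + h z w)"
  by (auto simp: psd_on_iff_kernel_form_nonneg kernel_form_add)

lemma kernel_form_const_one: "kernel_form (\<lambda>_ _. 1) m x c = of_real ((cmod (\<Sum>i<m. c i))\<^sup>2)"
  using kernel_form_rank_one[of "\<lambda>_. 1" m x c] by (simp flip: cnj_sum)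

lemma psd_on_const_one: "psd_on X (\<lambda>_ _. 1)"
  by (rule psd_onI) (simp add: kernel_form_const_one less_eq_complex_def)

text \<open>A kernel of the form \<open>card (V z \<inter> V w)\<close> is the Gram kernel of the indicator vectors of the
  sets \<open>V z\<close>; multiplying by it splits a quadratic form into one form per coordinate \<open>r\<close>.\<close>
lemma kernel_form_mult_overlap:
  assumes "finite U" "\<And>i. i < m \<Longrightarrow> V (x i) \<subseteq> U"
  shows "kernel_form (\<lambda>z w. k z w * of_nat (card (V z \<inter> V w))) m x c =
    (\<Sum>r\<in>U. kernel_form k m x (\<lambda>i. of_bool (r \<in> V (x i)) * c i))"
proof -
  define F where "F i j r = cnj (of_bool (r \<in> V (x i)) * c i) * (of_bool (r \<in> V (x j)) * c j) * k (x i) (x j)"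
    for i j r
  have "cnj (c i) * c j * (k (x i) (x j) * of_nat (card (V (x i) \<inter> V (x j)))) = (\<Sum>r\<in>U. F i j r)"
    if "i < m" "j < m" for i j
  proof -
    have "of_nat (card (V (x i) \<inter> V (x j))) = (\<Sum>r\<in>U. of_bool (r \<in> V (x i)) * of_bool (r \<in> V (x j)) :: complex)"
      using assms that by (intro card_inter_eq_sum) auto
    then show ?thesis
      by (simp add: F_def sum_distrib_left mult_ac)
  qed
  then have "kernel_form (\<lambda>z w. k z w * of_nat (card (V z \<inter> V w))) m x c = (\<Sum>i<m. \<Sum>j<m. \<Sum>r\<in>U. F i j r)"
    by (simp add: kernel_form_def)
  also have "\<dots> = (\<Sum>i<m. \<Sum>r\<in>U. \<Sum>j<m. F i j r)"
    by (rule sum.cong[OF refl], rule sum.swap)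
  also have "\<dots> = (\<Sum>r\<in>U. \<Sum>i<m. \<Sum>j<m. F i j r)"
    by (rule sum.swap)
  finally show ?thesis
    by (simp add: kernel_form_def F_def)
qed

lemma psd_on_mult_overlap:
  assumes "psd_on X k" "\<And>z. z \<in> X \<Longrightarrow> finite (V z)"
  shows "psd_on X (\<lambda>z w. k z w * of_nat (card (V z \<inter> V w)))"
proof (rule psd_onI)
  fix m :: nat and x c assume x: "\<And>i. i < m \<Longrightarrow> x i \<in> X"
  have "kernel_form (\<lambda>z w. k z w * of_nat (card (V z \<inter> V w))) m x c =
      (\<Sum>r\<in>(\<Union>i<m. V (x i)). kernel_form k m x (\<lambda>i. of_bool (r \<in> V (x i)) * c i))"
    using x assms(2) by (intro kernel_form_mult_overlap) auto
  also have "0 \<le> \<dots>"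
    using x assms(1) by (intro sum_nonneg psd_onD)
  finally show "0 \<le> kernel_form (\<lambda>z w. k z w * of_nat (card (V z \<inter> V w))) m x c" .
qed

lemma kernel_form_mult_overlap_lower_bound:
  assumes "psd_on X (\<lambda>z w. k z w - 1)" "\<And>z. z \<in> X \<Longrightarrow> finite (V z)"
    and "\<And>i. i < m \<Longrightarrow> x i \<in> X" "finite R"
  shows "(\<Sum>r\<in>R. (cmod (\<Sum>i<m. of_bool (r \<in> V (x i)) * c i))\<^sup>2)
    \<le> Re (kernel_form (\<lambda>z w. k z w * of_nat (card (V z \<inter> V w))) m x c)"
proof -
  define U where "U = R \<union> (\<Union>i<m. V (x i))"
  have U: "finite U" "\<And>i. i < m \<Longrightarrow> V (x i) \<subseteq> U"
    using assms by (auto simp: U_def)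
  have "(\<Sum>r\<in>R. (cmod (\<Sum>i<m. of_bool (r \<in> V (x i)) * c i))\<^sup>2)
      \<le> (\<Sum>r\<in>U. (cmod (\<Sum>i<m. of_bool (r \<in> V (x i)) * c i))\<^sup>2)"
    using U by (intro sum_mono2) (auto simp: U_def)
  also have "\<dots> = Re (\<Sum>r\<in>U. kernel_form (\<lambda>_ _. 1) m x (\<lambda>i. of_bool (r \<in> V (x i)) * c i))"
    by (simp add: kernel_form_const_one)
  also have "\<dots> = Re (kernel_form (\<lambda>z w. 1 * of_nat (card (V z \<inter> V w))) m x c)"
    by (simp only: kernel_form_mult_overlap[of U m V x "\<lambda>_ _. 1" c, OF U])
  also have "\<dots> \<le> Re (kernel_form (\<lambda>z w. k z w * of_nat (card (V z \<inter> V w))) m x c)"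
  proof -
    have "0 \<le> kernel_form (\<lambda>z w. (k z w - 1) * of_nat (card (V z \<inter> V w))) m x c"
      using assms by (intro psd_onD[OF psd_on_mult_overlap]) auto
    moreover have "kernel_form (\<lambda>z w. k z w * of_nat (card (V z \<inter> V w))) m x c =
        kernel_form (\<lambda>z w. 1 * of_nat (card (V z \<inter> V w))) m x c +
        kernel_form (\<lambda>z w. (k z w - 1) * of_nat (card (V z \<inter> V w))) m x c"
      by (simp add: kernel_form_add[symmetric] algebra_simps)
    ultimately show ?thesis by (simp add: less_eq_complex_def)
  qed
  finally show ?thesis .
qed

lemma comb_norm_eq_kernel_form: "comb_norm k m a x = sqrt (Re (kernel_form k m x a))"
proof -
  have "(\<Sum>i<m. \<Sum>j<m. a i * cnj (a j) * k (x j) (x i)) = kernel_form k m x a"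
    unfolding kernel_form_def by (subst sum.swap) (simp add: mult_ac)
  then show ?thesis
    by (simp add: comb_norm_def)
qed

lemma comb_norm_nonneg: "psd_on X k \<Longrightarrow> (\<And>i. i < m \<Longrightarrow> x i \<in> X) \<Longrightarrow> 0 \<le> comb_norm k m a x"
  using psd_onD[of X k m x a] by (simp add: comb_norm_eq_kernel_form less_eq_complex_def)

lemma span_dist_le_comb_norm:
  assumes "psd_on X k" "\<mu> ` {..<n} \<subseteq> X"
  shows "span_dist k n \<mu> \<le> comb_norm k n (\<lambda>i. (if i = 0 then 1 else - c i) / of_real (knorm k (\<mu> i))) \<mu>"
  unfolding span_dist_def using assms
  by (intro cINF_lower bdd_belowI[of _ 0]) (auto intro: comb_norm_nonneg)

lemma knorm_sq: "0 < k z z \<Longrightarrow> of_real ((knorm k z)\<^sup>2) = k z z"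
  by (simp add: knorm_def less_complex_def complex_eq_iff)

lemma knorm_pos: "0 < k z z \<Longrightarrow> 0 < knorm k z"
  by (simp add: knorm_def less_complex_def)

text \<open>The distance \<open>d_k(z, w)\<close> is the distance from \<open>k\<^sub>z/\<parallel>k\<^sub>z\<parallel>\<close> to the span of \<open>k\<^sub>w\<close>,
  attained at the coefficient \<open>\<beta>\<close> below.\<close>
lemma dk_eq_comb_norm:
  assumes herm: "k w z = cnj (k z w)" and pos: "0 < k z z" "0 < k w w"
  defines "\<mu> \<equiv> \<lambda>i::nat. if i = 0 then z else w"
    and "\<beta> \<equiv> k w z / of_real (knorm k z * knorm k w)"
  shows "dk k z w = comb_norm k 2 (\<lambda>i. (if i = 0 then 1 else - \<beta>) / of_real (knorm k (\<mu> i))) \<mu>"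
proof -
  define Kz Kw where "Kz = knorm k z" and "Kw = knorm k w"
  have K: "0 < Kz" "0 < Kw" "k z z = of_real (Kz\<^sup>2)" "k w w = of_real (Kw\<^sup>2)"
    using pos knorm_pos knorm_sq[symmetric] by (auto simp only: Kz_def Kw_def)
  have kwz: "k w z = \<beta> * of_real (Kz * Kw)" and kzw: "k z w = cnj \<beta> * of_real (Kz * Kw)"
    using K herm by (simp_all add: \<beta>_def Kz_def Kw_def complex_eq_iff)
  have "kernel_form k 2 \<mu> (\<lambda>i. (if i = 0 then 1 else - \<beta>) / of_real (knorm k (\<mu> i))) = 1 - \<beta> * cnj \<beta>"
    using K by (simp add: kernel_form_def numeral_2_eq_2 \<mu>_def kwz kzw field_simps
        flip: Kz_def Kw_def)
  also have "\<dots> = of_real (1 - (cmod \<beta>)\<^sup>2)"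
    by (simp only: of_real_diff of_real_1 complex_norm_square)
  moreover have "dk k z w = sqrt (1 - (cmod \<beta>)\<^sup>2)"
    by (simp add: dk_def \<beta>_def)
  ultimately show ?thesis
    by (simp add: comb_norm_eq_kernel_form)
qed

lemma weakly_separated_if_2_weakly_separated:
  assumes psd: "psd_on X k" and herm: "\<And>z w. z \<in> X \<Longrightarrow> w \<in> X \<Longrightarrow> k w z = cnj (k z w)"
    and pos: "\<And>z. z \<in> X \<Longrightarrow> 0 < k z z"
    and lam: "range lam \<subseteq> X" "inj lam" and sep: "n_weakly_separated 2 k lam"
  shows "weakly_separated k lam"
proof -
  obtain \<epsilon> where "\<epsilon> > 0"
    and \<epsilon>: "\<And>\<mu>. inj_on \<mu> {..<2} \<Longrightarrow> \<mu> ` {..<2} \<subseteq> range lam \<Longrightarrow> \<epsilon> \<le> span_dist k 2 \<mu>"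
    using sep unfolding n_weakly_separated_def by blast
  have "\<epsilon> \<le> dk k (lam i) (lam j)" if "i \<noteq> j" for i j
  proof -
    define \<mu> where "\<mu> t = (if t = 0 then lam i else lam j)" for t :: nat
    define \<beta> where "\<beta> = k (lam j) (lam i) / of_real (knorm k (lam i) * knorm k (lam j))"
    have "{..<2::nat} = {0, 1}" and "lam i \<noteq> lam j"
      using \<open>inj lam\<close> that by (auto simp: inj_eq)
    then have "inj_on \<mu> {..<2}" "\<mu> ` {..<2} \<subseteq> range lam"
      by (auto simp: \<mu>_def)
    then have "\<epsilon> \<le> span_dist k 2 \<mu>"
      by (rule \<epsilon>)
    also have "\<dots> \<le> comb_norm k 2 (\<lambda>t. (if t = 0 then 1 else - \<beta>) / of_real (knorm k (\<mu> t))) \<mu>"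
      using lam by (intro span_dist_le_comb_norm[OF psd]) (auto simp: \<mu>_def)
    also have "\<dots> = dk k (lam i) (lam j)"
      using lam unfolding \<mu>_def \<beta>_def by (intro dk_eq_comb_norm[symmetric] herm pos) auto
    finally show ?thesis .
  qed
  with \<open>\<epsilon> > 0\<close> show ?thesis
    unfolding weakly_separated_def by blast
qed

text \<open>Bessel's inequality, tested against \<open>c\<^sub>i = f(x\<^sub>i)/k(x\<^sub>i, x\<^sub>i)\<close>.\<close>
lemma rkhs_ball_orthogonal_bessel_seq:
  fixes m :: nat
  assumes ball: "rkhs_ball X k f C" and x: "\<And>i. i < m \<Longrightarrow> x i \<in> X"
    and orth: "\<And>i j. i < m \<Longrightarrow> j < m \<Longrightarrow> i \<noteq> j \<Longrightarrow> k (x i) (x j) = 0"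
    and pos: "\<And>i. i < m \<Longrightarrow> 0 < k (x i) (x i)"
  shows "(\<Sum>i<m. (cmod (f (x i)))\<^sup>2 / (knorm k (x i))\<^sup>2) \<le> C\<^sup>2"
proof -
  define \<kappa> where "\<kappa> i = (knorm k (x i))\<^sup>2" for i
  define c where "c i = f (x i) / of_real (\<kappa> i)" for i
  define S where "S = (\<Sum>i<m. (cmod (f (x i)))\<^sup>2 / \<kappa> i)"
  have \<kappa>: "0 < \<kappa> i" "k (x i) (x i) = of_real (\<kappa> i)" if "i < m" for i
    unfolding \<kappa>_def using knorm_pos[of k "x i"] knorm_sq[of k "x i"] pos[OF that] by simp_all
  have "kernel_form k m x c = (\<Sum>i<m. of_real ((cmod (c i))\<^sup>2) * k (x i) (x i))"
    using orth by (rule kernel_form_orthogonal)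
  also have "\<dots> = of_real S"
    unfolding S_def of_real_sum
  proof (rule sum.cong)
    fix i assume "i \<in> {..<m}"
    with \<kappa> have "0 < \<kappa> i" and k: "k (x i) (x i) = of_real (\<kappa> i)" by auto
    then have "(cmod (c i))\<^sup>2 * \<kappa> i = (cmod (f (x i)))\<^sup>2 / \<kappa> i"
      by (simp add: c_def norm_divide power_divide power2_eq_square)
    then show "of_real ((cmod (c i))\<^sup>2) * k (x i) (x i) = of_real ((cmod (f (x i)))\<^sup>2 / \<kappa> i)"
      by (metis k of_real_mult)
  qed simp
  finally have diag: "kernel_form k m x c = of_real S" .
  have "(\<Sum>i<m. cnj (c i) * f (x i)) = of_real S"
    unfolding S_def of_real_sum
  proof (rule sum.cong)
    fix i assume "i \<in> {..<m}"
    with \<kappa> have "0 < \<kappa> i" by auto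
    then show "cnj (c i) * f (x i) = of_real ((cmod (f (x i)))\<^sup>2 / \<kappa> i)"
      by (simp add: c_def field_simps flip: complex_norm_square)
  qed simp
  then have "kernel_form (\<lambda>z w. f z * cnj (f w)) m x c = of_real (S\<^sup>2)"
    by (simp add: kernel_form_rank_one)
  moreover have "0 \<le> kernel_form (\<lambda>z w. of_real (C\<^sup>2) * k z w - f z * cnj (f w)) m x c"
    using ball x by (intro psd_onD[of X]) (auto simp: rkhs_ball_def)
  ultimately have "S * S \<le> C\<^sup>2 * S"
    by (simp add: kernel_form_diff kernel_form_scale diag less_eq_complex_def power2_eq_square)
  moreover have "0 \<le> S"
    unfolding S_def using \<kappa>(1) by (intro sum_nonneg divide_nonneg_pos) auto
  ultimately have "S \<le> C\<^sup>2"
    by (cases "S = 0") (auto simp: mult_le_cancel_right)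
  then show ?thesis
    by (simp add: S_def \<kappa>_def)
qed

lemma rkhs_ball_orthogonal_bessel:
  assumes ball: "rkhs_ball X k f C" and P: "finite P" "P \<subseteq> X"
    and orth: "\<And>z w. z \<in> P \<Longrightarrow> w \<in> P \<Longrightarrow> z \<noteq> w \<Longrightarrow> k z w = 0"
    and pos: "\<And>z. z \<in> P \<Longrightarrow> 0 < k z z"
  shows "(\<Sum>z\<in>P. (cmod (f z))\<^sup>2 / (knorm k z)\<^sup>2) \<le> C\<^sup>2"
proof -
  obtain m :: nat and x where "P = x ` {i. i < m}" "inj_on x {i. i < m}"
    using finite_imp_nat_seg_image_inj_on[OF P(1)] by blast
  then have x: "P = x ` {..<m}" "inj_on x {..<m}"
    by (simp_all add: lessThan_def)
  have "(\<Sum>z\<in>P. (cmod (f z))\<^sup>2 / (knorm k z)\<^sup>2) = (\<Sum>i<m. (cmod (f (x i)))\<^sup>2 / (knorm k (x i))\<^sup>2)"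
    by (simp add: x sum.reindex)
  also have "\<dots> \<le> C\<^sup>2"
  proof (rule rkhs_ball_orthogonal_bessel_seq[OF ball])
    show "x i \<in> X" "0 < k (x i) (x i)" if "i < m" for i
      using that x(1) P(2) pos by auto
    show "k (x i) (x j) = 0" if "i < m" "j < m" "i \<noteq> j" for i j
      using that x orth by (metis image_eqI inj_on_def lessThan_iff)
  qed
  finally show ?thesis .
qed

section \<open>The Szego kernel on the half disc\<close>

lemma szego_minus_one_sums:
  assumes "cmod z < 1" "cmod w < 1"
  shows "(\<lambda>p. (z * cnj w) ^ Suc p) sums (szego z w - 1)"
proof -
  have "cmod z * cmod w < 1 * 1"
    using assms by (intro mult_strict_mono') auto
  then have "cmod (z * cnj w) < 1"
    by (simp add: norm_mult)
  then have "(\<lambda>p. (z * cnj w) * (z * cnj w) ^ p) sums ((z * cnj w) * (1 / (1 - z * cnj w)))"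
    by (intro sums_mult geometric_sums)
  moreover have "1 - z * cnj w \<noteq> 0"
    using \<open>cmod (z * cnj w) < 1\<close> by auto
  ultimately show ?thesis
    by (simp add: szego_def field_simps)
qed

lemma psd_szego_minus_one: "psd_on (ball 0 1) (\<lambda>z w. szego z w - 1)"
proof (rule psd_onI)
  fix m :: nat and x :: "nat \<Rightarrow> complex" and c
  assume x: "\<And>i. i < m \<Longrightarrow> x i \<in> ball 0 1"
  define B where "B p = (\<Sum>i<m. cnj (c i) * x i ^ Suc p)" for p
  have "(\<lambda>p. \<Sum>i<m. \<Sum>j<m. cnj (c i) * c j * (x i * cnj (x j)) ^ Suc p) sums kernel_form (\<lambda>z w. szego z w - 1) m x c"
    unfolding kernel_form_def using x by (intro sums_sum sums_mult szego_minus_one_sums) auto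
  moreover have "(\<Sum>i<m. \<Sum>j<m. cnj (c i) * c j * (x i * cnj (x j)) ^ Suc p) = of_real ((cmod (B p))\<^sup>2)" for p
  proof -
    have "(\<Sum>i<m. \<Sum>j<m. cnj (c i) * c j * (x i * cnj (x j)) ^ Suc p) = B p * cnj (B p)"
      unfolding B_def cnj_sum sum_product by (simp add: power_mult_distrib mult_ac)
    then show ?thesis
      by (simp only: complex_norm_square)
  qed
  ultimately have "(\<lambda>p. of_real ((cmod (B p))\<^sup>2)) sums kernel_form (\<lambda>z w. szego z w - 1) m x c"
    by simp
  then have re: "(\<lambda>p. (cmod (B p))\<^sup>2) sums Re (kernel_form (\<lambda>z w. szego z w - 1) m x c)"
    and im: "(\<lambda>p. 0) sums Im (kernel_form (\<lambda>z w. szego z w - 1) m x c)"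
    by (auto dest: sums_Re sums_Im)
  have "0 \<le> Re (kernel_form (\<lambda>z w. szego z w - 1) m x c)"
    using sums_le[OF _ sums_zero re] by simp
  moreover have "Im (kernel_form (\<lambda>z w. szego z w - 1) m x c) = 0"
    using sums_unique2[OF im sums_zero] .
  ultimately show "0 \<le> kernel_form (\<lambda>z w. szego z w - 1) m x c"
    by (simp add: less_eq_complex_def)
qed

lemma psd_szego: "psd_on (ball 0 1) szego"
  using psd_on_add[OF psd_on_const_one psd_szego_minus_one] by simp

lemma szego_diag: "szego z z = of_real (1 / (1 - (cmod z)\<^sup>2))"
  by (simp add: szego_def flip: complex_norm_square)

lemma szego_of_real: "szego (of_real u) (of_real v) = of_real (1 / (1 - u * v))"
  by (simp add: szego_def)

lemma half_disc_subset_ball: "half_disc \<subseteq> ball 0 1"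
  by (auto simp: half_disc_def)

lemma half_disc_norm_bound: "z \<in> half_disc \<Longrightarrow> 3/4 < 1 - (cmod z)\<^sup>2"
  using power_strict_mono[of "cmod z" "1/2" 2] by (simp add: half_disc_def power2_eq_square)

lemma knorm_szego: "z \<in> half_disc \<Longrightarrow> (knorm szego z)\<^sup>2 = 1 / (1 - (cmod z)\<^sup>2)"
  using half_disc_norm_bound[of z] by (simp add: knorm_def szego_diag)

lemma rkhs_ball_szego_one: "rkhs_ball half_disc szego (\<lambda>_. 1) 1"
  using psd_on_subset[OF psd_szego_minus_one half_disc_subset_ball] by (simp add: rkhs_ball_def)

text \<open>On the half disc the kernel functions of \<open>s\<close> have bounded norms, so the constant \<open>1\<close>
  violates the Carleson condition along every infinite sequence.\<close>
lemma not_carleson_half_disc: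
  assumes "range lam \<subseteq> half_disc"
  shows "\<not> carleson half_disc szego lam"
proof
  assume "carleson half_disc szego lam"
  then obtain C where "\<forall>f D. D \<ge> 0 \<longrightarrow> rkhs_ball half_disc szego f D \<longrightarrow>
      (\<forall>N. (\<Sum>i<N. (cmod (f (lam i)))\<^sup>2 / (knorm szego (lam i))\<^sup>2) \<le> C * D\<^sup>2)"
    unfolding carleson_def by blast
  note H = this[rule_format, OF zero_le_one rkhs_ball_szego_one]
  have C: "(\<Sum>i<N. 1 - (cmod (lam i))\<^sup>2) \<le> C" for N
    using H[of N] assms by (simp add: knorm_szego image_subset_iff)
  obtain N :: nat where "4/3 * C < N"
    using reals_Archimedean2 by blast
  moreover have "3/4 * real N \<le> (\<Sum>i<N. 1 - (cmod (lam i))\<^sup>2)"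
    using sum_mono[of "{..<N}" "\<lambda>_. 3/4" "\<lambda>i. 1 - (cmod (lam i))\<^sup>2"] assms half_disc_norm_bound
    by (simp add: image_subset_iff less_imp_le)
  ultimately show False
    using C[of N] by linarith
qed

section \<open>The kernel \<open>\<ell>\<close>\<close>

definition point :: "nat \<Rightarrow> complex" where
  "point N = of_real (1 / (real N + 3))"

definition block_end :: "nat \<Rightarrow> nat \<Rightarrow> nat" where
  "block_end n q = Suc n * (q div Suc n) + n"

text \<open>The indices are grouped into blocks \<open>{(n + 1) k, \<dots>, (n + 1) k + n}\<close>; the block end receives
  the atoms of the other \<open>n\<close> members. Points off the sequence get a private feature \<open>Inr z\<close>, so
  \<open>inv point\<close> is only used on \<open>range point\<close>.\<close>
definition atoms :: "nat \<Rightarrow> nat \<Rightarrow> nat set" where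
  "atoms n N = (if N mod Suc n = n then {N - n..<N} else {N})"

definition features :: "nat \<Rightarrow> complex \<Rightarrow> (nat + complex) set" where
  "features n z = (if z \<in> range point then Inl ` atoms n (inv point z) else {Inr z})"

definition ell :: "nat \<Rightarrow> complex \<Rightarrow> complex \<Rightarrow> complex" where
  "ell n z w = szego z w * of_nat (card (features n z \<inter> features n w))"

lemma inj_point: "inj point"
  by (auto simp: inj_def point_def)

lemma norm_point: "cmod (point N) = 1 / (real N + 3)"
  unfolding point_def norm_of_real by simp

lemma point_in_half_disc: "point N \<in> half_disc"
  by (simp add: half_disc_def norm_point field_simps)

lemma block_end_mod: "block_end n q mod Suc n = n"
  unfolding block_end_def by (metis add.commute lessI mod_less mod_mult_self2)

lemma mem_atoms: "q \<in> atoms n N \<longleftrightarrow> q mod Suc n \<noteq> n \<and> (N = q \<or> N = block_end n q)"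
proof (cases "N mod Suc n = n")
  case True
  define k d j where "k = N div Suc n" and "d = q div Suc n" and "j = q mod Suc n"
  have N: "N = Suc n * k + n" and q: "q = Suc n * d + j" and "j < Suc n"
    using True mult_div_mod_eq[of "Suc n" N] mult_div_mod_eq[of "Suc n" q]
    by (simp_all add: k_def d_def j_def)
  have "q \<in> {N - n..<N} \<longleftrightarrow> d = k \<and> j < n"
  proof
    assume "q \<in> {N - n..<N}"
    then have "d = k"
      using N by (auto simp: d_def intro: div_nat_eqI)
    then show "d = k \<and> j < n"
      using \<open>q \<in> {N - n..<N}\<close> N q by auto
  qed (use N q in auto)
  then have "q \<in> atoms n N \<longleftrightarrow> d = k \<and> j < n"
    using True by (simp add: atoms_def)
  moreover have "N \<noteq> q" if "j \<noteq> n"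
    using True that by (auto simp: j_def)
  moreover have "N = block_end n q \<longleftrightarrow> d = k"
    unfolding N block_end_def d_def by (metis add_right_cancel mult_cancel1 nat.distinct(1))
  ultimately have "q \<in> atoms n N \<longleftrightarrow> j \<noteq> n \<and> (N = q \<or> N = block_end n q)"
    using \<open>j < Suc n\<close> by auto
  then show ?thesis
    by (simp add: j_def)
next
  case False
  then show ?thesis
    by (auto simp: atoms_def block_end_mod)
qed

lemma card_atoms: "card (atoms n N) = (if N mod Suc n = n then n else 1)"
proof -
  have "N mod Suc n = n \<Longrightarrow> n \<le> N"
    by (metis mod_less_eq_dividend)
  then show ?thesis
    by (auto simp: atoms_def)
qed

lemma features_point: "features n (point N) = Inl ` atoms n N"
  by (simp add: features_def inv_f_f[OF inj_point])

lemma features_not_point: "z \<notin> range point \<Longrightarrow> features n z = {Inr z}"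
  by (simp add: features_def)

lemma Inr_in_features: "Inr z \<in> features n w \<longleftrightarrow> w = z \<and> z \<notin> range point"
  by (auto simp: features_def)

lemma finite_features: "finite (features n z)"
  by (simp add: features_def atoms_def)

lemma card_features_ge: "1 \<le> n \<Longrightarrow> 1 \<le> card (features n z)"
  by (cases "z \<in> range point") (auto simp: features_point features_not_point card_image card_atoms)

lemma card_features_le: "1 \<le> n \<Longrightarrow> z \<in> range point \<Longrightarrow> card (features n z) \<le> n"
  by (auto simp: features_point card_image card_atoms)

lemma ell_eq: "ell n = (\<lambda>z w. szego z w * of_nat (card (features n z \<inter> features n w)))"
  by (simp add: ell_def fun_eq_iff)

lemma ell_diag: "ell n z z = of_real (card (features n z) / (1 - (cmod z)\<^sup>2))"
  by (simp add: ell_def szego_diag)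

lemma ell_diag_pos: "1 \<le> n \<Longrightarrow> z \<in> half_disc \<Longrightarrow> 0 < ell n z z"
  using card_features_ge[of n z] half_disc_norm_bound[of z]
  by (simp add: ell_diag less_complex_def)

lemma ell_hermitian: "ell n w z = cnj (ell n z w)"
  by (simp add: ell_def szego_def Int_commute)

lemma psd_ell: "psd_on half_disc (ell n)"
  unfolding ell_eq
  by (rule psd_on_mult_overlap[OF psd_on_subset[OF psd_szego half_disc_subset_ball] finite_features])

lemma quot_psd_ell: "quot_psd_on half_disc (ell n) szego"
  using psd_on_mult_overlap[OF psd_on_const_one, of half_disc "features n"] finite_features
  unfolding quot_psd_on_def by (auto simp: ell_def)

lemma knorm_ell_sq_le:
  assumes "1 \<le> n" "z \<in> range point"
  shows "(knorm (ell n) z)\<^sup>2 \<le> 2 * n"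
proof -
  have "z \<in> half_disc"
    using assms(2) point_in_half_disc by auto
  then have "3/4 < 1 - (cmod z)\<^sup>2"
    by (rule half_disc_norm_bound)
  moreover have "real (card (features n z)) \<le> n"
    using card_features_le[OF assms] by simp
  ultimately have "real (card (features n z)) / (1 - (cmod z)\<^sup>2) \<le> n / (3/4)"
    by (intro frac_le) auto
  moreover have "(knorm (ell n) z)\<^sup>2 = real (card (features n z)) / (1 - (cmod z)\<^sup>2)"
    using \<open>3/4 < 1 - (cmod z)\<^sup>2\<close> by (simp add: knorm_def ell_diag)
  moreover have "real n / (3/4) \<le> 2 * n"
    by simp
  ultimately show ?thesis
    by linarith
qed

lemma sum_atoms_coordinate:
  fixes a :: "nat \<Rightarrow> 'a::semiring_1"
  assumes "q mod Suc n \<noteq> n"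
  shows "(\<Sum>i<m. of_bool (q \<in> atoms n (\<nu> i)) * a i) =
    sum a ({..<m} \<inter> {i. \<nu> i = q}) + sum a ({..<m} \<inter> {i. \<nu> i = block_end n q})"
proof -
  have "q \<noteq> block_end n q"
    using assms block_end_mod by metis
  then have "(\<Sum>i<m. of_bool (q \<in> atoms n (\<nu> i)) * a i) =
      (\<Sum>i<m. of_bool (\<nu> i = q) * a i + of_bool (\<nu> i = block_end n q) * a i)"
    using assms by (intro sum.cong) (auto simp: mem_atoms)
  then show ?thesis
    by (simp add: sum.distrib)
qed

lemma block_end_free_atom:
  assumes "L mod Suc n = n" "finite J" "finite E" "card J + card E < n"
  obtains q where "q mod Suc n \<noteq> n" "block_end n q = L" "q \<notin> E" "q \<notin> f ` J"
proof -
  have "n - card E \<le> card (atoms n L - E)"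
    using diff_card_le_card_Diff[OF assms(3), of "atoms n L"] assms(1) by (simp add: card_atoms)
  then have "card J < card (atoms n L - E)"
    using assms(4) by linarith
  then obtain q where "q \<in> atoms n L - E" "q \<notin> f ` J"
    using ex_not_in_image[OF assms(2)] by blast
  moreover have "L \<noteq> q" if "q mod Suc n \<noteq> n"
    using that assms(1) by auto
  ultimately show ?thesis
    using that by (auto simp: mem_atoms)
qed

lemma inj_on_preimage_singleton:
  "inj_on \<nu> {..<m} \<Longrightarrow> i0 < m \<Longrightarrow> {..<m} \<inter> {i. \<nu> i = \<nu> i0} = {i0}"
  by (auto dest: inj_onD)

lemma atoms_coordinate_at_block_end:
  fixes a :: "nat \<Rightarrow> complex"
  assumes "0 < m" "m \<le> n" "inj_on \<nu> {..<m}" "\<nu> 0 mod Suc n = n"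
  obtains q where "(\<Sum>i<m. of_bool (q \<in> atoms n (\<nu> i)) * a i) = a 0"
proof -
  have card: "card {1..<m} + card ({} :: nat set) < n"
    using assms(1,2) by simp
  obtain q where q: "q mod Suc n \<noteq> n" "block_end n q = \<nu> 0" "q \<notin> \<nu> ` {1..<m}"
    by (rule block_end_free_atom[OF assms(4) _ _ card]) auto
  have "{..<m} = insert 0 {1..<m}"
    using assms(1) by auto
  then have "{..<m} \<inter> {i. \<nu> i = q} = {}"
    using q assms(4) by auto
  then have "sum a ({..<m} \<inter> {i. \<nu> i = q}) + sum a ({..<m} \<inter> {i. \<nu> i = block_end n q}) = a 0"
    using q(2) inj_on_preimage_singleton[OF assms(3,1)] by simp
  then show ?thesis
    using that sum_atoms_coordinate[OF q(1), where m = m and \<nu> = \<nu> and a = a] by simp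
qed

lemma atoms_coordinates_below_block_end:
  fixes a :: "nat \<Rightarrow> complex"
  assumes "m \<le> n" "inj_on \<nu> {..<m}" "\<nu> 0 mod Suc n \<noteq> n" "p < m" "\<nu> p = block_end n (\<nu> 0)"
  obtains q where "q \<noteq> \<nu> 0" "(\<Sum>i<m. of_bool (q \<in> atoms n (\<nu> i)) * a i) = a p"
    "(\<Sum>i<m. of_bool (\<nu> 0 \<in> atoms n (\<nu> i)) * a i) = a 0 + a p"
proof -
  have "p \<noteq> 0"
    using assms(3,5) block_end_mod by metis
  then have "card ({..<m} - {0, p}) + card {\<nu> 0} < n"
    using assms(1,4) by simp
  moreover have "\<nu> p mod Suc n = n"
    using assms(5) block_end_mod by metis
  ultimately obtain q where q: "q mod Suc n \<noteq> n" "block_end n q = \<nu> p" "q \<noteq> \<nu> 0"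
    "q \<notin> \<nu> ` ({..<m} - {0, p})"
    using block_end_free_atom[of "\<nu> p" n "{..<m} - {0, p}" "{\<nu> 0}" \<nu>] by blast
  then have "{..<m} \<inter> {i. \<nu> i = q} = {}"
    using block_end_mod[of n q] by auto
  then have "sum a ({..<m} \<inter> {i. \<nu> i = q}) + sum a ({..<m} \<inter> {i. \<nu> i = block_end n q}) = a p"
    using q(2) inj_on_preimage_singleton[OF assms(2,4)] by simp
  moreover have "sum a ({..<m} \<inter> {i. \<nu> i = \<nu> 0}) + sum a ({..<m} \<inter> {i. \<nu> i = block_end n (\<nu> 0)})
      = a 0 + a p"
    using assms(4) assms(5)[symmetric] inj_on_preimage_singleton[OF assms(2)] by simp
  ultimately show ?thesis
    using that[of q] q(3) sum_atoms_coordinate[OF q(1), where m = m and \<nu> = \<nu> and a = a]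
      sum_atoms_coordinate[OF assms(3), where m = m and \<nu> = \<nu> and a = a]
    by simp
qed

text \<open>Distinct blocks are orthogonal, and any \<open>n\<close> of the \<open>n + 1\<close> feature vectors of a block are
  linearly independent; quantitatively, one or two coordinates of \<open>\<Sum> a\<^sub>i e\<^sub>i\<close> control \<open>a\<^sub>0\<close>.\<close>
lemma atoms_lower_bound:
  fixes a :: "nat \<Rightarrow> complex"
  assumes "0 < m" "m \<le> n" and inj: "inj_on \<nu> {..<m}"
  obtains R where "finite R"
    "(cmod (a 0))\<^sup>2 / 2 \<le> (\<Sum>q\<in>R. (cmod (\<Sum>i<m. of_bool (q \<in> atoms n (\<nu> i)) * a i))\<^sup>2)"
proof -
  define T where "T q = (\<Sum>i<m. of_bool (q \<in> atoms n (\<nu> i)) * a i)" for q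
  consider (last) "\<nu> 0 mod Suc n = n"
    | (alone) "\<nu> 0 mod Suc n \<noteq> n" "block_end n (\<nu> 0) \<notin> \<nu> ` {..<m}"
    | (pair) p where "\<nu> 0 mod Suc n \<noteq> n" "p < m" "\<nu> p = block_end n (\<nu> 0)"
    by (metis imageE lessThan_iff)
  then have "\<exists>R. finite R \<and> (cmod (a 0))\<^sup>2 / 2 \<le> (\<Sum>q\<in>R. (cmod (T q))\<^sup>2)"
  proof cases
    case last
    then obtain q where "T q = a 0"
      using atoms_coordinate_at_block_end[OF assms] unfolding T_def by blast
    then show ?thesis
      by (intro exI[of _ "{q}"]) simp
  next
    case alone
    have "{..<m} \<inter> {i. \<nu> i = N} = {}" if "N \<notin> \<nu> ` {..<m}" for N
      using that by auto
    then have "{..<m} \<inter> {i. \<nu> i = block_end n (\<nu> 0)} = {}"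
      using alone(2) .
    then have "T (\<nu> 0) = a 0"
      unfolding T_def using sum_atoms_coordinate[OF alone(1), where m = m and \<nu> = \<nu> and a = a] inj_on_preimage_singleton[OF inj assms(1)]
      by simp
    then show ?thesis
      by (intro exI[of _ "{\<nu> 0}"]) simp
  next
    case pair
    then obtain q where "q \<noteq> \<nu> 0" "T q = a p" "T (\<nu> 0) = a 0 + a p"
      using atoms_coordinates_below_block_end[OF assms(2) inj] unfolding T_def by blast
    then have "(\<Sum>q\<in>{\<nu> 0, q}. (cmod (T q))\<^sup>2) = (cmod (a 0 + a p))\<^sup>2 + (cmod (a p))\<^sup>2"
      by simp
    then show ?thesis
      using norm_sq_le_twice_sum_sq[of "a 0" "a p"] by (intro exI[of _ "{\<nu> 0, q}"]) simp
  qed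
  then show ?thesis
    using that by (auto simp: T_def)
qed

section \<open>Separation along the sequence\<close>

lemma kernel_form_ell_point_lower_bound:
  assumes "0 < m" "m \<le> n" "inj_on \<nu> {..<m}"
  shows "(cmod (a 0))\<^sup>2 / 2 \<le> Re (kernel_form (ell n) m (\<lambda>i. point (\<nu> i)) a)"
proof -
  obtain R where R: "finite R"
    "(cmod (a 0))\<^sup>2 / 2 \<le> (\<Sum>q\<in>R. (cmod (\<Sum>i<m. of_bool (q \<in> atoms n (\<nu> i)) * a i))\<^sup>2)"
    using atoms_lower_bound[OF assms] by blast
  note R(2)
  also have "(\<Sum>q\<in>R. (cmod (\<Sum>i<m. of_bool (q \<in> atoms n (\<nu> i)) * a i))\<^sup>2) =
      (\<Sum>r\<in>Inl ` R. (cmod (\<Sum>i<m. of_bool (r \<in> features n (point (\<nu> i))) * a i))\<^sup>2)"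
    by (simp add: sum.reindex features_point image_iff)
  also have "\<dots> \<le> Re (kernel_form (ell n) m (\<lambda>i. point (\<nu> i)) a)"
    unfolding ell_eq using R(1) finite_features point_in_half_disc
    by (intro kernel_form_mult_overlap_lower_bound[OF psd_on_subset[OF psd_szego_minus_one half_disc_subset_ball]])
      auto
  finally show ?thesis .
qed

lemma span_dist_ell_point_ge:
  assumes "0 < m" "m \<le> n" and \<mu>: "inj_on \<mu> {..<m}" "\<mu> ` {..<m} \<subseteq> range point"
  shows "sqrt (1 / (4 * real n)) \<le> span_dist (ell n) m \<mu>"
proof -
  define \<nu> where "\<nu> i = inv point (\<mu> i)" for i
  have \<mu>\<nu>: "\<mu> i = point (\<nu> i)" if "i < m" for i
    using \<mu>(2) that by (auto simp: \<nu>_def f_inv_into_f)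
  then have "inj_on \<nu> {..<m}"
    using \<mu>(1) by (metis inj_onD inj_onI lessThan_iff)
  have "1 \<le> n" "\<mu> 0 \<in> range point"
    using assms by auto
  define K where "K = knorm (ell n) (\<mu> 0)"
  have "\<mu> 0 \<in> half_disc"
    using \<open>\<mu> 0 \<in> range point\<close> point_in_half_disc by auto
  then have "0 < K"
    unfolding K_def by (intro knorm_pos ell_diag_pos[OF \<open>1 \<le> n\<close>])
  have "K\<^sup>2 \<le> 2 * n"
    unfolding K_def by (rule knorm_ell_sq_le) fact+
  show ?thesis
    unfolding span_dist_def
  proof (rule cINF_greatest)
    fix c :: "nat \<Rightarrow> complex"
    define a where "a i = (if i = 0 then 1 else - c i) / of_real (knorm (ell n) (\<mu> i))" for i
    have "1 / (4 * real n) \<le> 1 / (2 * K\<^sup>2)"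
      using \<open>0 < K\<close> \<open>K\<^sup>2 \<le> 2 * n\<close> \<open>1 \<le> n\<close> by (intro divide_left_mono) auto
    also have "\<dots> = (cmod (a 0))\<^sup>2 / 2"
      using \<open>0 < K\<close> by (simp add: a_def norm_divide power_divide flip: K_def)
    also have "\<dots> \<le> Re (kernel_form (ell n) m (\<lambda>i. point (\<nu> i)) a)"
      by (rule kernel_form_ell_point_lower_bound) fact+
    also have "kernel_form (ell n) m (\<lambda>i. point (\<nu> i)) a = kernel_form (ell n) m \<mu> a"
      using \<mu>\<nu> by (intro kernel_form_points_cong) auto
    finally show "sqrt (1 / (4 * real n)) \<le>
        comb_norm (ell n) m (\<lambda>i. (if i = 0 then 1 else - c i) / of_real (knorm (ell n) (\<mu> i))) \<mu>"
      by (simp add: comb_norm_eq_kernel_form a_def[abs_def] real_sqrt_le_mono)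
  qed simp
qed

lemma n_weakly_separated_ell_point:
  assumes "0 < m" "m \<le> n"
  shows "n_weakly_separated m (ell n) point"
  unfolding n_weakly_separated_def using assms span_dist_ell_point_ge[OF assms]
  by (intro exI[of _ "sqrt (1 / (4 * real n))"]) auto

lemma weakly_separated_ell_point:
  assumes "2 \<le> n"
  shows "weakly_separated (ell n) point"
proof (rule weakly_separated_if_2_weakly_separated[OF psd_ell])
  show "\<And>z. z \<in> half_disc \<Longrightarrow> 0 < ell n z z"
    using assms by (intro ell_diag_pos) auto
  show "n_weakly_separated 2 (ell n) point"
    using assms by (intro n_weakly_separated_ell_point) auto
  show "range point \<subseteq> half_disc"
    using point_in_half_disc by auto
qed (rule ell_hermitian, rule inj_point)

section \<open>Failure of \<open>(n + 1)\<close>-weak separation\<close>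

lemma szego_second_difference_le:
  fixes u v t :: real
  assumes "0 \<le> u" "u \<le> t" "0 \<le> v" "v \<le> t" "t \<le> 1/3"
  shows "1 / (1 - u\<^sup>2) - 2 / (1 - u * v) + 1 / (1 - v\<^sup>2) \<le> 3 * t\<^sup>2"
proof -
  have t: "t\<^sup>2 \<le> 1/9"
    using power_mono[OF assms(5), of 2] assms by (simp add: power2_eq_square)
  have diag: "1 / (1 - x\<^sup>2) \<le> 1 + 9/8 * t\<^sup>2" if "0 \<le> x" "x \<le> t" for x
  proof -
    have "x\<^sup>2 \<le> t\<^sup>2"
      using that by (intro power_mono) auto
    then have "8/9 \<le> 1 - x\<^sup>2"
      using t by linarith
    then have "x\<^sup>2 / (1 - x\<^sup>2) \<le> t\<^sup>2 / (8/9)"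
      using \<open>x\<^sup>2 \<le> t\<^sup>2\<close> by (intro frac_le) auto
    moreover have "1 / (1 - x\<^sup>2) = 1 + x\<^sup>2 / (1 - x\<^sup>2)"
      using \<open>8/9 \<le> 1 - x\<^sup>2\<close> by (simp add: field_simps)
    ultimately show ?thesis
      by simp
  qed
  have "u * v \<le> t * t"
    using assms by (intro mult_mono) auto
  then have "1 \<le> 1 / (1 - u * v)"
    using t assms by (simp add: power2_eq_square divide_simps)
  then show ?thesis
    using diag[OF assms(1,2)] diag[OF assms(3,4)] zero_le_power2[of t] by linarith
qed

lemma kernel_form_szego_pair:
  fixes u v K :: real
  assumes "0 < p" "p < m" "\<And>i. i < m \<Longrightarrow> i \<noteq> 0 \<Longrightarrow> i \<noteq> p \<Longrightarrow> b i = 0"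
    and "b 0 = of_real (1 / K)" "b p = of_real (- 1 / K)" "x 0 = of_real u" "x p = of_real v"
  shows "kernel_form szego m x b = of_real ((1 / (1 - u\<^sup>2) - 2 / (1 - u * v) + 1 / (1 - v\<^sup>2)) / K\<^sup>2)"
proof -
  have "kernel_form szego m x b = (\<Sum>i\<in>{0, p}. \<Sum>j\<in>{0, p}. cnj (b i) * b j * szego (x i) (x j))"
    using assms(1-3) by (intro kernel_form_support) auto
  also have "\<dots> = cnj (b 0) * b 0 * szego (x 0) (x 0) + cnj (b 0) * b p * szego (x 0) (x p) +
      (cnj (b p) * b 0 * szego (x p) (x 0) + cnj (b p) * b p * szego (x p) (x p))"
    using assms(1) by simp
  also have "\<dots> = of_real (1 / K * (1 / K) * (1 / (1 - u * u)) + 1 / K * (- 1 / K) * (1 / (1 - u * v)) +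
      (- 1 / K * (1 / K) * (1 / (1 - v * u)) + - 1 / K * (- 1 / K) * (1 / (1 - v * v))))"
    unfolding assms(4-7) szego_of_real complex_cnj_complex_of_real of_real_mult of_real_add ..
  also have "\<dots> = of_real ((1 / (1 - u\<^sup>2) - 2 / (1 - u * v) + 1 / (1 - v\<^sup>2)) / K\<^sup>2)"
    by (simp add: power2_eq_square mult.commute[of v u] diff_divide_distrib add_divide_distrib mult_ac)
  finally show ?thesis .
qed

definition block :: "nat \<Rightarrow> nat \<Rightarrow> nat \<Rightarrow> complex" where
  "block n k i = point (if i = 0 then Suc n * k + n else Suc n * k + (i - 1))"

lemma block_in_half_disc: "block n k i \<in> half_disc"
  by (simp add: block_def point_in_half_disc)

lemma inj_on_block: "inj_on (block n k) {..<Suc n}"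
proof -
  have "inj_on (\<lambda>i. if i = 0 then Suc n * k + n else Suc n * k + (i - 1)) {..<Suc n}"
    by (rule inj_onI) (auto split: if_splits)
  then show ?thesis
    unfolding block_def[abs_def] using comp_inj_on[OF _ inj_on_subset[OF inj_point subset_UNIV]]
    by (simp add: comp_def)
qed

lemma features_block:
  "features n (block n k 0) = Inl ` {Suc n * k..<Suc n * k + n}"
  "0 < i \<Longrightarrow> i < Suc n \<Longrightarrow> features n (block n k i) = {Inl (Suc n * k + (i - 1))}"
proof -
  have block_mod: "(Suc n * k + j) mod Suc n = j" if "j < Suc n" for j
    using that by (metis add.commute mod_less mod_mult_self2)
  show "features n (block n k 0) = Inl ` {Suc n * k..<Suc n * k + n}"
    using block_mod[of n] by (simp add: block_def features_point atoms_def)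
  show "features n (block n k i) = {Inl (Suc n * k + (i - 1))}" if "0 < i" "i < Suc n"
    using block_mod[of "i - 1"] that by (simp add: block_def features_point atoms_def)
qed

lemma knorm_block_end_sq_ge: "n \<le> (knorm (ell n) (block n k 0))\<^sup>2"
proof -
  have "3/4 < 1 - (cmod (block n k 0))\<^sup>2"
    using block_in_half_disc by (rule half_disc_norm_bound)
  moreover have "(knorm (ell n) (block n k 0))\<^sup>2 = n / (1 - (cmod (block n k 0))\<^sup>2)"
    using \<open>3/4 < 1 - (cmod (block n k 0))\<^sup>2\<close> unfolding knorm_def ell_diag features_block
    by (simp add: card_image)
  ultimately show ?thesis
    by (simp add: le_divide_eq mult_left_le)
qed

lemma kernel_form_szego_block_coordinate:
  fixes n k :: nat
  defines "B \<equiv> Suc n * k" and "K \<equiv> knorm (ell n) (block n k 0)"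
  assumes "r \<in> Inl ` {B..<B + n}"
  shows "Re (kernel_form szego (Suc n) (block n k)
      (\<lambda>i. of_bool (r \<in> features n (block n k i)) * of_real ((if i = 0 then 1 else - 1) / K)))
    \<le> 3 * (1 / (real B + 3))\<^sup>2 / K\<^sup>2"
proof -
  note features = features_block[where n = n and k = k, folded B_def]
  obtain q where q: "q < n" "r = Inl (B + q)"
    using assms(3) by (auto simp: B_def) (metis add_diff_inverse_nat add_less_cancel_left not_le)
  define u v where "u = 1 / (real (B + n) + 3)" and "v = 1 / (real (B + q) + 3)"
  have "kernel_form szego (Suc n) (block n k)
      (\<lambda>i. of_bool (r \<in> features n (block n k i)) * of_real ((if i = 0 then 1 else - 1) / K))
      = of_real ((1 / (1 - u\<^sup>2) - 2 / (1 - u * v) + 1 / (1 - v\<^sup>2)) / K\<^sup>2)"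
  proof (rule kernel_form_szego_pair)
    show "0 < Suc q" "Suc q < Suc n"
      using q by auto
    show "of_bool (r \<in> features n (block n k i)) * of_real ((if i = 0 then 1 else - 1) / K) = 0"
      if "i < Suc n" "i \<noteq> 0" "i \<noteq> Suc q" for i
      using that q features(2)[of i] by auto
    show "block n k 0 = of_real u" "block n k (Suc q) = of_real v"
      by (simp_all add: block_def point_def u_def v_def B_def)
  qed (use q features in auto)
  then have "Re (kernel_form szego (Suc n) (block n k)
      (\<lambda>i. of_bool (r \<in> features n (block n k i)) * of_real ((if i = 0 then 1 else - 1) / K)))
      = (1 / (1 - u\<^sup>2) - 2 / (1 - u * v) + 1 / (1 - v\<^sup>2)) / K\<^sup>2"
    by simp
  also have "\<dots> \<le> 3 * (1 / (real B + 3))\<^sup>2 / K\<^sup>2"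
    by (intro divide_right_mono szego_second_difference_le) (auto simp: u_def v_def frac_le)
  finally show ?thesis .
qed

text \<open>For \<open>g\<close> the feature vector of the block end is exactly the sum of those of the other
  \<open>n\<close> points; the Szego factor only adds second differences of \<open>s\<close> at points of size at most
  \<open>1/((n + 1) k + 3)\<close>, one for each of the \<open>n\<close> coordinates.\<close>
lemma kernel_form_ell_block_le:
  fixes n k :: nat
  assumes "1 \<le> n"
  defines "K \<equiv> knorm (ell n) (block n k 0)"
  shows "Re (kernel_form (ell n) (Suc n) (block n k) (\<lambda>i. of_real ((if i = 0 then 1 else - 1) / K)))
    \<le> 3 * (1 / (real (Suc n * k) + 3))\<^sup>2"
proof -
  define B where "B = Suc n * k"
  define t where "t = 1 / (real B + 3)"
  define e :: "nat \<Rightarrow> complex" where "e i = of_real ((if i = 0 then 1 else - 1) / K)" for i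
  define U :: "(nat + complex) set" where "U = Inl ` {B..<B + n}"
  have "0 < K"
    unfolding K_def using assms(1) block_in_half_disc by (intro knorm_pos ell_diag_pos)
  have cover: "features n (block n k i) \<subseteq> U" if "i < Suc n" for i
    using that features_block[where n = n and k = k, folded B_def]
    by (cases "i = 0") (auto simp: U_def intro!: imageI)
  have "kernel_form (ell n) (Suc n) (block n k) e =
      (\<Sum>r\<in>U. kernel_form szego (Suc n) (block n k) (\<lambda>i. of_bool (r \<in> features n (block n k i)) * e i))"
    unfolding ell_eq by (rule kernel_form_mult_overlap) (use cover in \<open>auto simp: U_def\<close>)
  then have "Re (kernel_form (ell n) (Suc n) (block n k) e) =
      (\<Sum>r\<in>U. Re (kernel_form szego (Suc n) (block n k) (\<lambda>i. of_bool (r \<in> features n (block n k i)) * e i)))"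
    by (simp add: Re_sum)
  also have "\<dots> \<le> (\<Sum>r\<in>U. 3 * t\<^sup>2 / K\<^sup>2)"
    unfolding e_def t_def K_def B_def U_def by (intro sum_mono kernel_form_szego_block_coordinate)
  also have "\<dots> = n * (3 * t\<^sup>2) / K\<^sup>2"
    by (simp add: card_image U_def)
  also have "\<dots> \<le> K\<^sup>2 * (3 * t\<^sup>2) / K\<^sup>2"
    unfolding K_def by (intro divide_right_mono mult_right_mono knorm_block_end_sq_ge) auto
  also have "\<dots> = 3 * t\<^sup>2"
    using \<open>0 < K\<close> by simp
  finally show ?thesis
    by (simp only: e_def[abs_def] t_def B_def)
qed

lemma span_dist_ell_block_le:
  assumes "1 \<le> n"
  shows "span_dist (ell n) (Suc n) (block n k) \<le> sqrt 3 / (real (Suc n * k) + 3)"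
proof -
  define K where "K i = knorm (ell n) (block n k i)" for i
  define e :: "nat \<Rightarrow> complex" where "e i = of_real ((if i = 0 then 1 else - 1) / K 0)" for i
  have K_pos: "0 < K i" for i
    unfolding K_def using assms block_in_half_disc by (intro knorm_pos ell_diag_pos)
  have "span_dist (ell n) (Suc n) (block n k) \<le> comb_norm (ell n) (Suc n)
      (\<lambda>i. (if i = 0 then 1 else - of_real (K i / K 0)) / of_real (knorm (ell n) (block n k i))) (block n k)"
    using block_in_half_disc by (intro span_dist_le_comb_norm[OF psd_ell]) auto
  also have "(\<lambda>i. (if i = 0 then 1 else - of_real (K i / K 0)) / of_real (knorm (ell n) (block n k i))) = e"
    using K_pos by (auto simp: e_def fun_eq_iff simp flip: K_def) (metis less_irrefl)
  also have "comb_norm (ell n) (Suc n) e (block n k) \<le> sqrt (3 * (1 / (real (Suc n * k) + 3))\<^sup>2)"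
    unfolding comb_norm_eq_kernel_form e_def K_def using kernel_form_ell_block_le[OF assms]
    by (rule real_sqrt_le_mono)
  also have "\<dots> = sqrt 3 / (real (Suc n * k) + 3)"
    by (simp add: real_sqrt_mult)
  finally show ?thesis .
qed

lemma not_Suc_n_weakly_separated_ell_point:
  assumes "1 \<le> n"
  shows "\<not> n_weakly_separated (Suc n) (ell n) point"
proof
  assume "n_weakly_separated (Suc n) (ell n) point"
  then obtain \<epsilon> where "\<epsilon> > 0"
    and \<epsilon>: "\<And>\<mu>. inj_on \<mu> {..<Suc n} \<Longrightarrow> \<mu> ` {..<Suc n} \<subseteq> range point \<Longrightarrow>
      \<epsilon> \<le> span_dist (ell n) (Suc n) \<mu>"
    unfolding n_weakly_separated_def by blast
  obtain k :: nat where k: "sqrt 3 / \<epsilon> < k"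
    using reals_Archimedean2 by blast
  have "\<epsilon> \<le> span_dist (ell n) (Suc n) (block n k)"
    using inj_on_block by (rule \<epsilon>) (auto simp: block_def)
  also have "\<dots> \<le> sqrt 3 / (real (Suc n * k) + 3)"
    by (rule span_dist_ell_block_le[OF assms])
  also have "\<dots> < \<epsilon>"
  proof -
    have "\<epsilon> * real k \<le> \<epsilon> * (real (Suc n * k) + 3)"
      using \<open>\<epsilon> > 0\<close> by (intro mult_left_mono) auto
    moreover have "sqrt 3 < \<epsilon> * real k"
      using k \<open>\<epsilon> > 0\<close> by (simp add: pos_divide_less_eq mult.commute)
    ultimately have "sqrt 3 < \<epsilon> * (real (Suc n * k) + 3)"
      by linarith
    moreover have "0 < real (Suc n * k) + 3"
      by (rule add_nonneg_pos) simp_all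
    ultimately show ?thesis
      by (simp only: pos_divide_less_eq mult.commute)
  qed
  finally show False
    by simp
qed

text \<open>Points of the same kind (both block ends or both not) have disjoint feature sets.\<close>
lemma ell_eq_0_same_kind:
  assumes "z \<noteq> w"
    and "z \<in> point ` {N. N mod Suc n = n} \<longleftrightarrow> w \<in> point ` {N. N mod Suc n = n}"
  shows "ell n z w = 0"
proof -
  have "features n z \<inter> features n w = {}"
  proof (cases "z \<in> range point \<and> w \<in> range point")
    case True
    then obtain N M where zw: "z = point N" "w = point M"
      by auto
    then have "N \<noteq> M" "N mod Suc n = n \<longleftrightarrow> M mod Suc n = n"
      using assms inj_point by (auto simp: inj_eq)
    then have "atoms n N \<inter> atoms n M = {}"
      using block_end_mod by (auto simp: mem_atoms)
    then show ?thesis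
      by (auto simp: zw features_point)
  next
    case False
    then show ?thesis
      using assms(1) by (auto simp: features_def Inr_in_features)
  qed
  then show ?thesis
    by (simp add: ell_def)
qed

section \<open>Interpolating sequences\<close>

lemma interpolating_inj:
  assumes interp: "interpolating X s l lam"
    and nonzero: "\<And>i. knorm l (lam i) / knorm s (lam i) \<noteq> 0"
  shows "inj lam"
proof (rule injI, rule ccontr)
  fix i j assume "lam i = lam j" "i \<noteq> j"
  have "\<exists>B. \<forall>t. cmod (of_bool (t = i) :: complex) \<le> B"
    by (intro exI[of _ 1]) (simp add: of_bool_def)
  from interp[unfolded interpolating_def, rule_format, OF this]
  obtain \<phi> :: "'a \<Rightarrow> complex"
    where "\<forall>t. \<phi> (lam t) = of_bool (t = i) * of_real (knorm l (lam t) / knorm s (lam t))"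
    by blast
  then have "of_real (knorm l (lam i) / knorm s (lam i)) = (0 :: complex)"
    using \<open>i \<noteq> j\<close> \<open>lam i = lam j\<close> by (metis mult_1 mult_zero_left of_bool_eq(1,2))
  with nonzero show False
    by simp
qed

lemma interpolating_constant_in_ball:
  assumes interp: "interpolating X s l lam" and one: "rkhs_ball X s (\<lambda>_. 1) 1"
  obtains \<phi> M where "rkhs_ball X l \<phi> M" "\<And>t. \<phi> (lam t) = of_real (knorm l (lam t) / knorm s (lam t))"
proof -
  have "\<exists>B. \<forall>t. cmod (1 :: complex) \<le> B"
    by blast
  from interp[unfolded interpolating_def, rule_format, OF this]
  obtain \<phi> where "is_multiplier X s l \<phi>" and \<phi>: "\<And>t. \<phi> (lam t) = of_real (knorm l (lam t) / knorm s (lam t))"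
    by auto
  then obtain M where "\<forall>f C. C \<ge> 0 \<longrightarrow> rkhs_ball X s f C \<longrightarrow> rkhs_ball X l (\<lambda>z. \<phi> z * f z) (M * C)"
    unfolding is_multiplier_def by blast
  from this[rule_format, OF zero_le_one one] have "rkhs_ball X l \<phi> M"
    by simp
  with \<phi> show ?thesis
    using that by blast
qed

text \<open>Every infinite set contains arbitrarily large families with pairwise disjoint feature sets,
  to which Bessel's inequality applies.\<close>
lemma rkhs_ball_ell_not_large_on_infinite:
  assumes "1 \<le> n" and ball: "rkhs_ball half_disc (ell n) \<phi> M"
    and S: "S \<subseteq> half_disc" "infinite S"
    and large: "\<And>z. z \<in> S \<Longrightarrow> c \<le> (cmod (\<phi> z))\<^sup>2 / (knorm (ell n) z)\<^sup>2"
    and "0 < c"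
  shows False
proof -
  obtain m :: nat where m: "M\<^sup>2 / c < m"
    using reals_Archimedean2 by blast
  obtain P where P: "P \<subseteq> S" "finite P" "card P = m"
    and kind: "\<And>z w. z \<in> P \<Longrightarrow> w \<in> P \<Longrightarrow>
      (z \<in> point ` {N. N mod Suc n = n} \<longleftrightarrow> w \<in> point ` {N. N mod Suc n = n})"
    using infinite_obtain_one_sided_subset[OF S(2), where m = m and C = "point ` {N. N mod Suc n = n}"]
    by blast
  have "c * real m = (\<Sum>z\<in>P. c)"
    using P(3) by simp
  also have "\<dots> \<le> (\<Sum>z\<in>P. (cmod (\<phi> z))\<^sup>2 / (knorm (ell n) z)\<^sup>2)"
    using P(1) large by (intro sum_mono) auto
  also have "\<dots> \<le> M\<^sup>2"
  proof (rule rkhs_ball_orthogonal_bessel[OF ball P(2)])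
    show "P \<subseteq> half_disc"
      using P(1) S(1) by blast
    show "ell n z w = 0" if "z \<in> P" "w \<in> P" "z \<noteq> w" for z w
      using that by (intro ell_eq_0_same_kind kind)
    show "0 < ell n z z" if "z \<in> P" for z
      using that P(1) S(1) ell_diag_pos[OF assms(1)] by blast
  qed
  finally show False
    using m \<open>0 < c\<close> by (simp add: divide_less_eq mult.commute)
qed

text \<open>A function interpolating the constant values \<open>1\<close> lies in some ball of \<open>H\<^sub>\<ell>\<close> and has
  \<open>|\<phi>(z)|\<^sup>2 / \<ell>(z, z) = 1 - |z|\<^sup>2 > 3/4\<close> along the sequence.\<close>
lemma not_interpolating_ell:
  assumes "1 \<le> n" and lam: "range lam \<subseteq> half_disc"
  shows "\<not> interpolating half_disc szego (ell n) lam"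
proof
  assume interp: "interpolating half_disc szego (ell n) lam"
  have knorms_pos: "0 < knorm (ell n) z" "0 < knorm szego z" if "z \<in> half_disc" for z
    using knorm_pos[of "ell n" z] knorm_pos[of szego z] ell_diag_pos[OF assms(1) that]
      half_disc_norm_bound[OF that] by (auto simp: szego_diag less_complex_def)
  have "inj lam"
    using interp
  proof (rule interpolating_inj)
    fix i
    have "lam i \<in> half_disc"
      using lam by auto
    then show "knorm (ell n) (lam i) / knorm szego (lam i) \<noteq> 0"
      using knorms_pos by (simp add: less_imp_neq[symmetric])
  qed
  then have "infinite (range lam)"
    by (simp add: finite_image_iff)
  obtain \<phi> M where ball: "rkhs_ball half_disc (ell n) \<phi> M"
    and \<phi>: "\<And>t. \<phi> (lam t) = of_real (knorm (ell n) (lam t) / knorm szego (lam t))"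
    using interpolating_constant_in_ball[OF interp rkhs_ball_szego_one] by blast
  have large: "3/4 \<le> (cmod (\<phi> z))\<^sup>2 / (knorm (ell n) z)\<^sup>2" if z: "z \<in> range lam" for z
  proof -
    obtain t where "z = lam t"
      using z by auto
    have "z \<in> half_disc"
      using z lam by auto
    then have "(cmod (\<phi> z))\<^sup>2 / (knorm (ell n) z)\<^sup>2 = 1 - (cmod z)\<^sup>2"
      using \<phi>[of t] knorm_szego[OF \<open>z \<in> half_disc\<close>] knorms_pos[OF \<open>z \<in> half_disc\<close>]
      by (simp add: \<open>z = lam t\<close> norm_divide power_divide)
    then show ?thesis
      using half_disc_norm_bound[OF \<open>z \<in> half_disc\<close>] by simp
  qed
  show False
    using rkhs_ball_ell_not_large_on_infinite[OF assms(1) ball lam \<open>infinite (range lam)\<close> large]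
    by simp
qed

theorem mainTheorem10:
  fixes n :: nat
  assumes "n \<ge> 2"
  shows "\<exists>l :: complex \<Rightarrow> complex \<Rightarrow> complex.
    psd_on half_disc l \<and> (\<forall>z\<in>half_disc. l z z \<noteq> 0) \<and>
    quot_psd_on half_disc l szego \<and>
    (\<forall>lam. range lam \<subseteq> half_disc \<longrightarrow>
       (interpolating half_disc szego l lam \<longleftrightarrow>
          carleson half_disc szego lam \<and> weakly_separated l lam)) \<and>
    \<not> automatic_separation half_disc l \<and>
    (\<exists>lam. range lam \<subseteq> half_disc \<and>
       n_weakly_separated n l lam \<and> \<not> n_weakly_separated (n + 1) l lam)"
proof (intro exI[of _ "ell n"] conjI)
  have "1 \<le> n"
    using assms by simp
  have points: "range point \<subseteq> half_disc"
    using point_in_half_disc by auto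
  have separated: "n_weakly_separated n (ell n) point"
    using assms by (intro n_weakly_separated_ell_point) auto
  have not_separated: "\<not> n_weakly_separated (n + 1) (ell n) point"
    using not_Suc_n_weakly_separated_ell_point[OF \<open>1 \<le> n\<close>] by simp
  show "psd_on half_disc (ell n)" "quot_psd_on half_disc (ell n) szego"
    by (rule psd_ell, rule quot_psd_ell)
  show "\<forall>z\<in>half_disc. ell n z z \<noteq> 0"
    using ell_diag_pos[OF \<open>1 \<le> n\<close>] by force
  show "\<forall>lam. range lam \<subseteq> half_disc \<longrightarrow> (interpolating half_disc szego (ell n) lam \<longleftrightarrow>
      carleson half_disc szego lam \<and> weakly_separated (ell n) lam)"
    using not_interpolating_ell[OF \<open>1 \<le> n\<close>] not_carleson_half_disc by blast
  show "\<not> automatic_separation half_disc (ell n)"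
    unfolding automatic_separation_def
    using points weakly_separated_ell_point[OF assms] not_separated assms by force
  show "\<exists>lam. range lam \<subseteq> half_disc \<and> n_weakly_separated n (ell n) lam \<and>
      \<not> n_weakly_separated (n + 1) (ell n) lam"
    using points separated not_separated by blast
qed

end
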